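(* Let $t\ge 0$ be an integer. In the exponential-edge chip-firing process beginning with $2^{t+2}$ chips with distinct labels at site $0$, the final configuration (when no firing move is possible) has all chips in weakly sorted order: for any chips $a<b$, the final position of $a$ is at most the final position of $b$, regardless of the choices of firing moves made.
   Context: Exponential-edge graph with parameter $t$: the vertex set is $\mathbb{Z}$; for each $0\le k\le t$ there are $2^{t-k}$ parallel edges between $k$ and $k+1$ and $2^{t-k}$ parallel edges between $-k$ and $-k-1$; all other pairs of adjacent integers are joined by a single edge. If a site has $a$ edges to its left neighbor and $b$ edges to its right neighbor, a firing move at that site chooses $a+b$ chips present there and sends the $a$ smallest of them to the left neighbor and the $b$ largest to the right neighbor. *)

theory Defs
  imports Main
begin

text \<open>Number of parallel edges between sites i and i+1 in the exponential-edge
graph with parameter t.  For 0 \<le> k \<le> t there are 2^(t-k) edges between k and k+1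
and between -k and -k-1 (i.e. between i and i+1 with i = -k-1); all other
adjacent pairs have one edge.\<close>
definition edges :: "nat \<Rightarrow> int \<Rightarrow> nat" where
  "edges t i =
     (if 0 \<le> i \<and> i \<le> int t then 2 ^ (t - nat i)
      else if - int t - 1 \<le> i \<and> i \<le> -1 then 2 ^ (t - nat (- i - 1))
      else 1)"

definition left_edges :: "nat \<Rightarrow> int \<Rightarrow> nat" where
  "left_edges t v = edges t (v - 1)"

definition right_edges :: "nat \<Rightarrow> int \<Rightarrow> nat" where
  "right_edges t v = edges t v"

text \<open>Chips are labelled 0,...,N-1 (labels ordered as naturals); a configuration
assigns to each chip its site.  Chips at site v among chips < N:\<close>
definition chips_at :: "nat \<Rightarrow> (nat \<Rightarrow> int) \<Rightarrow> int \<Rightarrow> nat set" where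
  "chips_at N c v = {i. i < N \<and> c i = v}"

text \<open>One firing move at site v using the chosen set S of a+b chips there:
the a smallest go left, the b largest go right.\<close>
definition fire :: "nat \<Rightarrow> int \<Rightarrow> nat set \<Rightarrow> (nat \<Rightarrow> int) \<Rightarrow> (nat \<Rightarrow> int)" where
  "fire t v S c = (\<lambda>i. if i \<in> S then
       (if card {j \<in> S. j < i} < left_edges t v then v - 1 else v + 1)
     else c i)"

definition step :: "nat \<Rightarrow> nat \<Rightarrow> (nat \<Rightarrow> int) \<Rightarrow> (nat \<Rightarrow> int) \<Rightarrow> bool" where
  "step t N c c' \<longleftrightarrow> (\<exists>v S. S \<subseteq> chips_at N c v \<and>
       card S = left_edges t v + right_edges t v \<and> c' = fire t v S c)"

definition stable :: "nat \<Rightarrow> nat \<Rightarrow> (nat \<Rightarrow> int) \<Rightarrow> bool" where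
  "stable t N c \<longleftrightarrow> (\<forall>v. card (chips_at N c v) < left_edges t v + right_edges t v)"

end

(* Every reachable configuration satisfies an invariant: chips at positive sites have labels
   at least 2^t; a chip at a site v >= 2 lies among the 2^(t+2-v) largest labels; once 2^(t+1)
   chips sit at positive sites, the chips at the origin have labels below 3*2^t; the number of
   chips beyond a site k >= 0 is a multiple of the number of edges between k and k+1; the same
   four statements hold for the reflected configuration (labels reversed, sites negated); each
   side of the origin holds 2^t or 2^(t+1) chips; the moment sum_k 2^(min k t) #{chips beyond k}
   equals that of the reflection; and a condition orders the chips at sites -1 and 1.
   In a stable configuration the origin holds fewer than 2^(t+1) chips, so one side holds
   2^(t+1); stability and divisibility then force exactly 2^(t+1-k) chips beyond each site
   k <= t+1 on that side, and the balance of moments forces the same on the other side.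
   Hence the origin is empty, the chips beyond a site v >= 2 are exactly the 2^(t+2-v) largest
   labels (and symmetrically on the left), and the last condition orders the chips at -1 and 1. *)

theory Submission
  imports Defs
begin

lemma sum_mult_if_unique:
  fixes n a :: nat
  assumes "\<And>k. P k \<longleftrightarrow> k = a"
  shows "(\<Sum>k<n. f k * (if P k then x else 0)) = (if a < n then f a * x else (0::'a::semiring_0))"
proof -
  have "(\<Sum>k<n. f k * (if P k then x else 0)) = (\<Sum>k<n. if k = a then f k * x else 0)"
    using assms by (intro sum.cong) auto
  then show ?thesis by simp
qed

lemma dvd_eq_if_le_less_add:
  fixes e x m :: nat
  assumes "e dvd x" "e dvd m" "m < x + e" "x \<le> m"
  shows "x = m"
proof -
  have "e dvd m - x" using assms(2,1) by (rule dvd_diff_nat)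
  moreover have "m - x < e" using assms(3,4) by linarith
  ultimately have "m - x = 0" by (metis dvd_imp_le not_gr0 not_le)
  then show ?thesis using assms(4) by simp
qed

section \<open>Ranks in a finite set\<close>

definition rank :: "nat set \<Rightarrow> nat \<Rightarrow> nat" where
  "rank S i = card {j \<in> S. j < i}"

lemma rank_strict_mono:
  assumes "i \<in> S" "i < i'"
  shows "rank S i < rank S i'"
proof -
  have "{j \<in> S. j < i} \<subset> {j \<in> S. j < i'}" using assms by auto
  then show ?thesis unfolding rank_def by (simp add: psubset_card_mono)
qed

lemma rank_mono: "i \<le> i' \<Longrightarrow> rank S i \<le> rank S i'"
  unfolding rank_def by (intro card_mono) auto

lemma less_if_rank_less: "rank S i < rank S i' \<Longrightarrow> i < i'"
  using rank_mono[of i' i S] by (cases "i' \<le> i") auto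

lemma rank_less_card: "finite S \<Longrightarrow> i \<in> S \<Longrightarrow> rank S i < card S"
  unfolding rank_def by (intro psubset_card_mono) auto

lemma bij_betw_rank:
  assumes "finite S"
  shows "bij_betw (rank S) S {..<card S}"
proof -
  have inj: "inj_on (rank S) S"
    by (rule inj_onI) (metis rank_strict_mono less_irrefl nat_neq_iff)
  moreover have "rank S ` S \<subseteq> {..<card S}" using rank_less_card[OF assms] by auto
  moreover have "card (rank S ` S) = card {..<card S}" using card_image[OF inj] by simp
  ultimately show ?thesis unfolding bij_betw_def by (intro conjI card_subset_eq) auto
qed

lemma card_rank_less:
  assumes "finite S" "l \<le> card S"
  shows "card {i \<in> S. rank S i < l} = l"
proof -
  have "bij_betw (rank S) S {..<card S}" using bij_betw_rank[OF assms(1)] .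
  then have "bij_betw (rank S) {i \<in> S. rank S i < l} {..<l}"
    using assms(2) unfolding bij_betw_def by (auto intro: inj_on_subset)
  then show ?thesis by (simp add: bij_betw_same_card)
qed

lemma card_rank_ge:
  assumes "finite S" "l \<le> card S"
  shows "card {i \<in> S. \<not> rank S i < l} = card S - l"
proof -
  have "{i \<in> S. \<not> rank S i < l} = S - {i \<in> S. rank S i < l}" by auto
  then show ?thesis using card_rank_less[OF assms] assms(1) by (simp add: card_Diff_subset)
qed

lemma lower_bound_add_rank_le:
  assumes "\<forall>j\<in>S. g \<le> j" "i \<in> S"
  shows "g + rank S i \<le> i"
proof -
  have "rank S i \<le> card {g..<i}"
    unfolding rank_def using assms(1) by (intro card_mono) auto
  then show ?thesis using assms by force
qed

lemma card_greater_add_rank: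
  assumes "finite S" "s \<in> S"
  shows "card {j \<in> S. s < j} + rank S s + 1 = card S"
proof -
  have "S = {j \<in> S. s < j} \<union> {j \<in> S. j < s} \<union> {s}" using assms by auto
  moreover have "card ({j \<in> S. s < j} \<union> {j \<in> S. j < s} \<union> {s})
      = card {j \<in> S. s < j} + card {j \<in> S. j < s} + 1"
    using assms(1) by (subst card_Un_disjoint; auto simp: card_Un_disjoint)+
  ultimately show ?thesis unfolding rank_def by simp
qed

section \<open>Edge multiplicities\<close>

lemma edges_ge_1: "1 \<le> edges t i"
  unfolding edges_def by auto

lemma edges_of_nat: "k \<le> t \<Longrightarrow> edges t (int k) = 2 ^ (t - k)"
  unfolding edges_def by auto

lemma edges_beyond: "int t < i \<Longrightarrow> edges t i = 1"
  unfolding edges_def by auto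

lemma edges_reflect: "edges t (- i - 1) = edges t i"
  unfolding edges_def by (auto simp: nat_diff_distrib)

lemma left_edges_uminus: "left_edges t (- v) = right_edges t v"
  unfolding left_edges_def right_edges_def using edges_reflect[of t v] by simp

lemma right_edges_uminus: "right_edges t (- v) = left_edges t v"
  unfolding left_edges_def right_edges_def using edges_reflect[of t "v - 1"] by simp

lemma left_edges_of_nat: "1 \<le> k \<Longrightarrow> k \<le> t + 1 \<Longrightarrow> left_edges t (int k) = 2 ^ (t + 1 - k)"
  unfolding left_edges_def using edges_of_nat[of "k - 1" t] by (simp add: of_nat_diff)

lemma right_edges_of_nat: "k \<le> t \<Longrightarrow> right_edges t (int k) = 2 ^ (t - k)"
  unfolding right_edges_def by (rule edges_of_nat)

lemma left_edges_0 [simp]: "left_edges t 0 = 2 ^ t"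
  unfolding left_edges_def edges_def by auto

lemma right_edges_0 [simp]: "right_edges t 0 = 2 ^ t"
  unfolding right_edges_def edges_def by auto

lemma left_edges_1 [simp]: "left_edges t 1 = 2 ^ t"
  using left_edges_of_nat[of 1 t] by simp

section \<open>Chip counts and firing moves\<close>

definition chip_count :: "nat \<Rightarrow> (nat \<Rightarrow> int) \<Rightarrow> int set \<Rightarrow> nat" where
  "chip_count N c X = card {i. i < N \<and> c i \<in> X}"

lemma card_chips_at: "card (chips_at N c v) = chip_count N c {v}"
  unfolding chip_count_def chips_at_def by simp

lemma chip_count_Un_disjoint:
  assumes "X \<inter> Y = {}"
  shows "chip_count N c (X \<union> Y) = chip_count N c X + chip_count N c Y"
proof -
  have "{i. i < N \<and> c i \<in> X \<union> Y} = {i. i < N \<and> c i \<in> X} \<union> {i. i < N \<and> c i \<in> Y}" by auto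
  then show ?thesis unfolding chip_count_def
    using assms by (simp add: card_Un_disjoint disjoint_iff)
qed

lemma chip_count_mono: "X \<subseteq> Y \<Longrightarrow> chip_count N c X \<le> chip_count N c Y"
  unfolding chip_count_def by (intro card_mono) auto

lemma chip_count_eq_0_iff: "chip_count N c X = 0 \<longleftrightarrow> (\<forall>i<N. c i \<notin> X)"
  unfolding chip_count_def by auto

lemma chip_count_if_all_zero:
  assumes "\<forall>i<N. c i = 0"
  shows "chip_count N c X = (if 0 \<in> X then N else 0)"
proof -
  have "{i. i < N \<and> c i \<in> X} = (if 0 \<in> X then {..<N} else {})" using assms by auto
  then show ?thesis unfolding chip_count_def by simp
qed

lemma not_all_zero_if_chip_count:
  assumes "0 \<notin> X" "chip_count N c X \<noteq> 0"
  shows "\<not> (\<forall>i<N. c i = 0)"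
  using assms chip_count_if_all_zero[of N c X] by auto

lemma chip_count_sign_split:
  "chip_count N c {0} + chip_count N c {x. 1 \<le> x} + chip_count N c {x. x \<le> -1} = N"
proof -
  have "{0} \<union> {x. 1 \<le> x} \<union> {x::int. x \<le> -1} = UNIV" by auto
  then have "chip_count N c ({0} \<union> {x. 1 \<le> x} \<union> {x. x \<le> -1}) = N"
    unfolding chip_count_def by simp
  moreover have "chip_count N c ({0} \<union> {x. 1 \<le> x} \<union> {x. x \<le> -1})
      = chip_count N c {0} + chip_count N c {x. 1 \<le> x} + chip_count N c {x. x \<le> -1}"
    by (subst chip_count_Un_disjoint, force)+ simp
  ultimately show ?thesis by simp
qed

lemma chip_count_ge_split:
  "chip_count N c {x. a \<le> x} = chip_count N c {a} + chip_count N c {x. a + 1 \<le> x}"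
proof -
  have "{x. a \<le> x} = {a} \<union> {x. a + 1 \<le> x}" "{a} \<inter> {x. a + 1 \<le> x} = {}" by auto
  then show ?thesis by (metis chip_count_Un_disjoint)
qed

lemma chip_count_le_split:
  "chip_count N c {x. x \<le> b} = chip_count N c {b} + chip_count N c {x. x \<le> b - 1}"
proof -
  have "{x. x \<le> b} = {b} \<union> {x. x \<le> b - 1}" "{b} \<inter> {x. x \<le> b - 1} = {}" by auto
  then show ?thesis by (metis chip_count_Un_disjoint)
qed

lemma stable_chip_count: "stable t N c \<Longrightarrow> chip_count N c {v} < left_edges t v + right_edges t v"
  unfolding stable_def by (metis card_chips_at)

definition legal_firing :: "nat \<Rightarrow> nat \<Rightarrow> (nat \<Rightarrow> int) \<Rightarrow> int \<Rightarrow> nat set \<Rightarrow> bool" where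
  "legal_firing t N c v S \<longleftrightarrow> S \<subseteq> chips_at N c v \<and> card S = left_edges t v + right_edges t v"

lemma step_iff_legal_firing: "step t N c c' \<longleftrightarrow> (\<exists>v S. legal_firing t N c v S \<and> c' = fire t v S c)"
  unfolding step_def legal_firing_def by auto

lemma fire_eq_rank:
  "fire t v S c i = (if i \<in> S then if rank S i < left_edges t v then v - 1 else v + 1 else c i)"
  unfolding fire_def rank_def by simp

lemma legal_firing_finite: "legal_firing t N c v S \<Longrightarrow> finite S"
  unfolding legal_firing_def chips_at_def by (auto intro: finite_subset[of S "{..<N}"])

lemma legal_firing_chip: "legal_firing t N c v S \<Longrightarrow> i \<in> S \<Longrightarrow> i < N \<and> c i = v"
  unfolding legal_firing_def chips_at_def by auto

lemma legal_firing_card: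
  "legal_firing t N c v S \<Longrightarrow> card S = left_edges t v + right_edges t v"
  unfolding legal_firing_def by simp

lemma legal_firing_chip_count:
  assumes "legal_firing t N c v S"
  shows "left_edges t v + right_edges t v \<le> chip_count N c {v}"
proof -
  have "card S \<le> card (chips_at N c v)"
    using assms unfolding legal_firing_def chips_at_def by (intro card_mono) auto
  then show ?thesis using assms by (simp add: legal_firing_card card_chips_at)
qed

lemma legal_firing_at_0_if_all_zero:
  assumes "legal_firing t N c v S" "\<forall>i<N. c i = 0"
  shows "v = 0"
proof (rule ccontr)
  assume "v \<noteq> 0"
  then have "chip_count N c {v} = 0" using chip_count_if_all_zero[OF assms(2)] by simp
  then show False using legal_firing_chip_count[OF assms(1)] edges_ge_1[of t "v - 1"]
    unfolding left_edges_def by simp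
qed

lemma chip_count_fire:
  assumes L: "legal_firing t N c v S"
  shows "chip_count N (fire t v S c) X + (if v \<in> X then left_edges t v + right_edges t v else 0)
     = chip_count N c X + (if v - 1 \<in> X then left_edges t v else 0)
       + (if v + 1 \<in> X then right_edges t v else 0)"
proof -
  let ?l = "left_edges t v" and ?r = "right_edges t v"
  let ?R = "{i. i < N \<and> c i \<in> X} - S"
  let ?SL = "{i \<in> S. rank S i < ?l}" and ?SR = "{i \<in> S. \<not> rank S i < ?l}"
  let ?moved = "(if v - 1 \<in> X then ?SL else {}) \<union> (if v + 1 \<in> X then ?SR else {})"
  have fin: "finite S" using legal_firing_finite[OF L] .
  have cS: "card S = ?l + ?r" using legal_firing_card[OF L] .
  have sub: "\<And>i. i \<in> S \<Longrightarrow> i < N \<and> c i = v" using legal_firing_chip[OF L] by blast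
  have "chip_count N c X = card (?R \<union> (if v \<in> X then S else {}))"
    unfolding chip_count_def using sub by (intro arg_cong[where f = card]) auto
  also have "\<dots> = card ?R + (if v \<in> X then card S else 0)"
    using card_Un_disjoint[of ?R S] fin by (cases "v \<in> X") auto
  finally have before: "chip_count N c X = card ?R + (if v \<in> X then card S else 0)" .
  have "card ?SL = ?l" "card ?SR = ?r"
    using card_rank_less[OF fin] card_rank_ge[OF fin] cS by simp_all
  then have moved: "card ?moved = (if v - 1 \<in> X then ?l else 0) + (if v + 1 \<in> X then ?r else 0)"
    using fin by (subst card_Un_disjoint) auto
  have "chip_count N (fire t v S c) X = card (?R \<union> ?moved)"
    unfolding chip_count_def using sub
    by (intro arg_cong[where f = card]) (auto simp: fire_eq_rank split: if_splits)
  also have "\<dots> = card ?R + card ?moved" using fin by (intro card_Un_disjoint) auto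
  finally have after: "chip_count N (fire t v S c) X
      = card ?R + ((if v - 1 \<in> X then ?l else 0) + (if v + 1 \<in> X then ?r else 0))"
    unfolding moved .
  show ?thesis unfolding before after using cS by auto
qed

lemma chip_count_ge_fire:
  assumes "legal_firing t N c v S"
  shows "chip_count N (fire t v S c) {x. a \<le> x} + (if v = a then left_edges t v else 0)
     = chip_count N c {x. a \<le> x} + (if v + 1 = a then right_edges t v else 0)"
  using chip_count_fire[OF assms, of "{x. a \<le> x}"] by (auto split: if_splits)

lemma chip_count_le_fire:
  assumes "legal_firing t N c v S"
  shows "chip_count N (fire t v S c) {x. x \<le> b} + (if v = b then right_edges t v else 0)
     = chip_count N c {x. x \<le> b} + (if v - 1 = b then left_edges t v else 0)"
  using chip_count_fire[OF assms, of "{x. x \<le> b}"] by (cases "v = b") (auto split: if_splits)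

section \<open>The reflection symmetry\<close>

text \<open>Reversing the labels and reflecting the sites is a symmetry of the process
  (\<open>mirror_fire\<close>), so firings at negative sites never need separate treatment.\<close>
definition mirror :: "nat \<Rightarrow> (nat \<Rightarrow> int) \<Rightarrow> nat \<Rightarrow> int" where
  "mirror N c i = (if i < N then - c (N - 1 - i) else c i)"

lemma mirror_mirror [simp]: "mirror N (mirror N c) = c"
  unfolding mirror_def by (rule ext) auto

lemma mirror_flip: "i < N \<Longrightarrow> mirror N c (N - 1 - i) = - c i"
  unfolding mirror_def by simp

lemma mirror_all_zero_iff: "(\<forall>i<N. mirror N c i = 0) \<longleftrightarrow> (\<forall>i<N. c i = 0)"
proof -
  have "\<forall>i<N. c i = 0" if "\<forall>i<N. mirror N c i = 0" for c
  proof (intro allI impI)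
    fix i assume "i < N"
    then show "c i = 0" using that[rule_format, of "N - 1 - i"] mirror_flip[of i N c] by simp
  qed
  from this[of c] this[of "mirror N c"] show ?thesis by auto
qed

lemma chip_count_mirror: "chip_count N (mirror N c) X = chip_count N c (uminus ` X)"
proof -
  have "{i. i < N \<and> mirror N c i \<in> X} = (\<lambda>i. N - 1 - i) ` {i. i < N \<and> c i \<in> uminus ` X}"
  proof (rule set_eqI, rule iffI)
    fix x assume "x \<in> {i. i < N \<and> mirror N c i \<in> X}"
    then have "x < N" "- c (N - 1 - x) \<in> X" unfolding mirror_def by auto
    then show "x \<in> (\<lambda>i. N - 1 - i) ` {i. i < N \<and> c i \<in> uminus ` X}"
      by (intro image_eqI[of _ _ "N - 1 - x"]) (auto intro: image_eqI[of _ _ "- c (N - 1 - x)"])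
  qed (auto simp: mirror_def)
  moreover have "inj_on (\<lambda>i. N - 1 - i) {i. i < N \<and> c i \<in> uminus ` X}"
    by (rule inj_onI) auto
  ultimately show ?thesis unfolding chip_count_def by (simp add: card_image)
qed

lemma chip_count_mirror_ge: "chip_count N (mirror N c) {x. a \<le> x} = chip_count N c {x. x \<le> - a}"
proof -
  have "uminus ` {x. a \<le> x} = {x::int. x \<le> - a}"
    by (auto intro: image_eqI[of _ _ "- _"])
  then show ?thesis by (simp add: chip_count_mirror)
qed

lemma chip_count_mirror_le: "chip_count N (mirror N c) {x. x \<le> - a} = chip_count N c {x. a \<le> x}"
  using chip_count_mirror_ge[of N "mirror N c" a] by simp

lemma stable_mirror:
  assumes "stable t N c"
  shows "stable t N (mirror N c)"
  unfolding stable_def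
proof
  fix v
  have "card (chips_at N c (- v)) < left_edges t (- v) + right_edges t (- v)"
    using assms unfolding stable_def by blast
  then show "card (chips_at N (mirror N c) v) < left_edges t v + right_edges t v"
    by (simp add: card_chips_at chip_count_mirror left_edges_uminus right_edges_uminus)
qed

lemma flip_flip: "j < N \<Longrightarrow> N - 1 - (N - 1 - j) = (j::nat)"
  by linarith

lemma inj_on_flip:
  fixes A :: "nat set"
  assumes "\<forall>j\<in>A. j < N"
  shows "inj_on (\<lambda>j. N - 1 - j) A"
proof (rule inj_onI)
  fix x y assume "x \<in> A" "y \<in> A" "N - 1 - x = N - 1 - y"
  moreover from calculation have "x < N" "y < N" using assms by auto
  ultimately show "x = y" by linarith
qed

lemma flip_image_iff:
  fixes S :: "nat set"
  assumes "\<forall>j\<in>S. j < N" "i < N"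
  shows "i \<in> (\<lambda>j. N - 1 - j) ` S \<longleftrightarrow> N - 1 - i \<in> S"
proof
  assume "i \<in> (\<lambda>j. N - 1 - j) ` S"
  then obtain j where "j \<in> S" "i = N - 1 - j" by auto
  then show "N - 1 - i \<in> S" using assms(1) flip_flip[of j N] by auto
qed (use assms(2) in \<open>auto intro: image_eqI[of _ _ "N - 1 - i"]\<close>)

lemma rank_flip_image:
  assumes "\<forall>j\<in>S. j < N" "s \<in> S"
  shows "rank ((\<lambda>j. N - 1 - j) ` S) (N - 1 - s) = card {j \<in> S. s < j}"
proof -
  have "{j \<in> (\<lambda>j. N - 1 - j) ` S. j < N - 1 - s} = (\<lambda>j. N - 1 - j) ` {j \<in> S. s < j}"
    using assms by force
  moreover have "inj_on (\<lambda>j. N - 1 - j) {j \<in> S. s < j}"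
    using assms(1) by (intro inj_on_flip) auto
  ultimately show ?thesis unfolding rank_def by (simp add: card_image)
qed

lemma legal_firing_mirror:
  assumes L: "legal_firing t N c v S"
  shows "legal_firing t N (mirror N c) (- v) ((\<lambda>i. N - 1 - i) ` S)"
proof -
  have sub: "\<And>i. i \<in> S \<Longrightarrow> i < N \<and> c i = v" using legal_firing_chip[OF L] by blast
  have "inj_on (\<lambda>i. N - 1 - i) S"
    using sub by (intro inj_on_flip) blast
  then have "card ((\<lambda>i. N - 1 - i) ` S) = left_edges t (- v) + right_edges t (- v)"
    using legal_firing_card[OF L] by (simp add: card_image left_edges_uminus right_edges_uminus)
  moreover have "(\<lambda>i. N - 1 - i) ` S \<subseteq> chips_at N (mirror N c) (- v)"
    unfolding chips_at_def using sub mirror_flip by fastforce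
  ultimately show ?thesis unfolding legal_firing_def by simp
qed

lemma mirror_fire:
  assumes L: "legal_firing t N c v S"
  shows "mirror N (fire t v S c) = fire t (- v) ((\<lambda>i. N - 1 - i) ` S) (mirror N c)"
proof
  fix i
  let ?S' = "(\<lambda>i. N - 1 - i) ` S" and ?s = "N - 1 - i"
  have fin: "finite S" using legal_firing_finite[OF L] .
  have sub: "\<forall>j\<in>S. j < N" using legal_firing_chip[OF L] by blast
  show "mirror N (fire t v S c) i = fire t (- v) ?S' (mirror N c) i"
  proof (cases "i < N")
    case False
    then have "i \<notin> S" "i \<notin> ?S'" using sub by auto
    then show ?thesis using False unfolding mirror_def by (simp add: fire_eq_rank)
  next
    case True
    note iff = flip_image_iff[OF sub True]
    show ?thesis
    proof (cases "?s \<in> S")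
      case False
      then show ?thesis using True iff unfolding mirror_def by (simp add: fire_eq_rank)
    next
      case sS: True
      have "rank ?S' i = card {j \<in> S. ?s < j}"
        using rank_flip_image[OF sub sS] True by simp
      then have "rank ?S' i < left_edges t (- v) \<longleftrightarrow> \<not> rank S ?s < left_edges t v"
        using card_greater_add_rank[OF fin sS] legal_firing_card[OF L] left_edges_uminus by auto
      then show ?thesis using True sS iff unfolding mirror_def by (simp add: fire_eq_rank)
    qed
  qed
qed

section \<open>The invariant\<close>

locale exp_chip_sorting =
  fixes t N :: nat
  assumes N_eq: "N = 4 * 2 ^ t"
begin

lemma pow_le_N: "j \<le> t + 2 \<Longrightarrow> (2::nat) ^ j \<le> N"
  using N_eq power_increasing[of j "t + 2" "2::nat"] by (simp add: power_add)

definition positive_sites_high :: "(nat \<Rightarrow> int) \<Rightarrow> bool" where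
  "positive_sites_high c \<longleftrightarrow> (\<forall>i<N. 1 \<le> c i \<longrightarrow> 2 ^ t \<le> i)"

definition far_sites_top :: "(nat \<Rightarrow> int) \<Rightarrow> bool" where
  "far_sites_top c \<longleftrightarrow>
     (\<forall>i<N. 2 \<le> c i \<longrightarrow> c i \<le> int t + 2 \<and> N - 2 ^ (t + 2 - nat (c i)) \<le> i)"

definition origin_low :: "(nat \<Rightarrow> int) \<Rightarrow> bool" where
  "origin_low c \<longleftrightarrow>
     (chip_count N c {x. 1 \<le> x} = 2 * 2 ^ t \<longrightarrow> (\<forall>i<N. c i = 0 \<longrightarrow> i < 3 * 2 ^ t))"

definition tails_divisible :: "(nat \<Rightarrow> int) \<Rightarrow> bool" where
  "tails_divisible c \<longleftrightarrow> (\<forall>k::nat. edges t (int k) dvd chip_count N c {x. int k + 1 \<le> x})"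

definition right_invariant :: "(nat \<Rightarrow> int) \<Rightarrow> bool" where
  "right_invariant c \<longleftrightarrow>
     positive_sites_high c \<and> far_sites_top c \<and> origin_low c \<and> tails_divisible c"

definition side_counts :: "(nat \<Rightarrow> int) \<Rightarrow> bool" where
  "side_counts c \<longleftrightarrow> (\<forall>i<N. c i = 0) \<or>
     (chip_count N c {x. 1 \<le> x} \<in> {2 ^ t, 2 * 2 ^ t} \<and>
      chip_count N c {x. x \<le> -1} \<in> {2 ^ t, 2 * 2 ^ t})"

lemma side_counts_cases:
  assumes "side_counts c" "\<not> (\<forall>i<N. c i = 0)"
  shows "chip_count N c {x. 1 \<le> x} \<in> {2 ^ t, 2 * 2 ^ t}"
    and "chip_count N c {x. x \<le> -1} \<in> {2 ^ t, 2 * 2 ^ t}"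
  using assms unfolding side_counts_def by auto

lemma negative_site_label_less:
  assumes "positive_sites_high (mirror N c)" "i < N" "c i \<le> -1"
  shows "i < 3 * 2 ^ t"
proof -
  have "2 ^ t \<le> N - 1 - i"
    using assms mirror_flip[of i N c] unfolding positive_sites_high_def by force
  then show ?thesis using N_eq assms(2) by linarith
qed

lemma far_sites_top_subset:
  assumes "far_sites_top c" "2 \<le> j"
  shows "{i. i < N \<and> c i \<in> {x. int j \<le> x}} \<subseteq> {N - 2 ^ (t + 2 - j)..<N}"
proof
  fix i assume "i \<in> {i. i < N \<and> c i \<in> {x. int j \<le> x}}"
  then have i: "i < N" "int j \<le> c i" by auto
  then have "N - 2 ^ (t + 2 - nat (c i)) \<le> i" using assms unfolding far_sites_top_def by auto
  moreover have "(2::nat) ^ (t + 2 - nat (c i)) \<le> 2 ^ (t + 2 - j)"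
    using i by (intro power_increasing) auto
  ultimately have "N - 2 ^ (t + 2 - j) \<le> i" by linarith
  then show "i \<in> {N - 2 ^ (t + 2 - j)..<N}" using i by simp
qed

lemma far_sites_top_chip_count:
  assumes "far_sites_top c" "2 \<le> j"
  shows "chip_count N c {x. int j \<le> x} \<le> 2 ^ (t + 2 - j)"
  unfolding chip_count_def using card_mono[OF _ far_sites_top_subset[OF assms]] by simp

lemma far_sites_top_firing_site:
  assumes B: "far_sites_top c" and L: "legal_firing t N c v S" and v: "2 \<le> v"
  shows "v \<le> int t + 1"
proof (rule ccontr)
  assume "\<not> v \<le> int t + 1"
  moreover have "card S \<ge> 2"
    using legal_firing_card[OF L] edges_ge_1[of t "v - 1"] edges_ge_1[of t v]
    unfolding left_edges_def right_edges_def by simp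
  then obtain i where "i \<in> S" by fastforce
  then have "v \<le> int t + 2" using B legal_firing_chip[OF L] v unfolding far_sites_top_def by auto
  ultimately have vt: "v = int t + 2" by simp
  have "S \<subseteq> {N - 1}"
  proof
    fix j assume "j \<in> S"
    then have "j < N" "c j = v" using legal_firing_chip[OF L] by auto
    then show "j \<in> {N - 1}" using B v vt unfolding far_sites_top_def by force
  qed
  then have "card S \<le> 1" using card_mono[of "{N - 1}" S] by simp
  then show False using \<open>card S \<ge> 2\<close> by simp
qed

lemma origin_firing_empties_origin:
  assumes E: "side_counts c" and L: "legal_firing t N c 0 S" and nz: "\<not> (\<forall>i<N. c i = 0)"
  shows "S = chips_at N c 0"
    and "chip_count N c {x. 1 \<le> x} = 2 ^ t" "chip_count N c {x. x \<le> -1} = 2 ^ t"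
proof -
  note sides = side_counts_cases[OF E nz]
  have "2 * 2 ^ t \<le> chip_count N c {0}" using legal_firing_chip_count[OF L] by simp
  moreover have "chip_count N c {0} + chip_count N c {x. 1 \<le> x} + chip_count N c {x. x \<le> -1} = N"
    by (rule chip_count_sign_split)
  ultimately have "chip_count N c {x. 1 \<le> x} = 2 ^ t" "chip_count N c {x. x \<le> -1} = 2 ^ t"
    and origin: "chip_count N c {0} = 2 * 2 ^ t"
    using sides N_eq by auto
  then show "chip_count N c {x. 1 \<le> x} = 2 ^ t" "chip_count N c {x. x \<le> -1} = 2 ^ t"
    by simp_all
  have "card S = card (chips_at N c 0)" using legal_firing_card[OF L] origin card_chips_at by simp
  moreover have "S \<subseteq> chips_at N c 0" using L unfolding legal_firing_def by simp
  ultimately show "S = chips_at N c 0" unfolding chips_at_def by (intro card_subset_eq) auto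
qed

lemma positive_sites_high_fire:
  assumes A: "positive_sites_high c" and L: "legal_firing t N c v S"
  shows "positive_sites_high (fire t v S c)"
  unfolding positive_sites_high_def
proof (intro allI impI)
  fix i assume i: "i < N" "1 \<le> fire t v S c i"
  show "2 ^ t \<le> i"
  proof (cases "i \<in> S \<and> v = 0")
    case True
    then have "2 ^ t \<le> rank S i" using i by (auto simp: fire_eq_rank split: if_splits)
    then show ?thesis using lower_bound_add_rank_le[of S 0 i] True by simp
  next
    case False
    then have "1 \<le> c i"
      using i legal_firing_chip[OF L] by (auto simp: fire_eq_rank split: if_splits)
    then show ?thesis using A i unfolding positive_sites_high_def by simp
  qed
qed

text \<open>Chips at the origin and at negative sites all carry labels below \<open>3 * 2 ^ t\<close>, so the
  \<open>2 ^ t\<close> labels from \<open>3 * 2 ^ t\<close> on occupy half of the \<open>2 * 2 ^ t\<close> chips at positive sites.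
  The other half cannot contain a chip together with the \<open>2 ^ t\<close> chips of \<open>S\<close> below it.\<close>
lemma site_1_right_movers_top:
  assumes C: "origin_low c" and AR: "positive_sites_high (mirror N c)" and E: "side_counts c"
    and L: "legal_firing t N c 1 S" and iS: "i \<in> S" and right: "\<not> rank S i < 2 ^ t"
  shows "3 * 2 ^ t \<le> i"
proof (rule ccontr)
  assume low: "\<not> 3 * 2 ^ t \<le> i"
  have "2 ^ t + 1 \<le> chip_count N c {1}"
    using legal_firing_chip_count[OF L] edges_ge_1[of t 1] unfolding right_edges_def by simp
  moreover have "chip_count N c {1} \<le> chip_count N c {x. 1 \<le> x}" by (rule chip_count_mono) auto
  moreover have "\<not> (\<forall>i<N. c i = 0)" using legal_firing_at_0_if_all_zero[OF L] by auto
  ultimately have full: "chip_count N c {x. 1 \<le> x} = 2 * 2 ^ t"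
    using side_counts_cases(1)[OF E] by auto
  let ?T = "{j. j < N \<and> c j \<in> {x. 1 \<le> x}}"
  have "{3 * 2 ^ t..<N} \<subseteq> ?T"
  proof
    fix j assume j: "j \<in> {3 * 2 ^ t..<N}"
    then have "c j \<noteq> 0" "\<not> c j \<le> -1"
      using C full negative_site_label_less[OF AR, of j] unfolding origin_low_def by auto
    then show "j \<in> ?T" using j by auto
  qed
  then have rest: "card (?T - {3 * 2 ^ t..<N}) = 2 ^ t"
    using full N_eq unfolding chip_count_def by (subst card_Diff_subset) auto
  have "rank S i + 1 = card (insert i {j \<in> S. j < i})"
    unfolding rank_def using legal_firing_finite[OF L] by simp
  also have "\<dots> \<le> card (?T - {3 * 2 ^ t..<N})"
    using legal_firing_chip[OF L] iS low by (intro card_mono) auto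
  finally show False using right rest by simp
qed

lemma far_sites_top_fire_right:
  assumes B: "far_sites_top c" and L: "legal_firing t N c v S" and v: "2 \<le> v"
    and iS: "i \<in> S" and right: "\<not> rank S i < left_edges t v"
  shows "v + 1 \<le> int t + 2 \<and> N - 2 ^ (t + 2 - nat (v + 1)) \<le> i"
proof -
  define k where "k = nat v"
  have k: "v = int k" "2 \<le> k" "k \<le> t + 1"
    using far_sites_top_firing_site[OF B L v] v unfolding k_def by auto
  have "\<forall>j\<in>S. N - 2 ^ (t + 2 - k) \<le> j"
  proof
    fix j assume "j \<in> S"
    then have "j < N" "c j = int k" using legal_firing_chip[OF L] k by auto
    then show "N - 2 ^ (t + 2 - k) \<le> j" using B k unfolding far_sites_top_def by force
  qed
  then have "N - 2 ^ (t + 2 - k) + rank S i \<le> i" using iS by (rule lower_bound_add_rank_le)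
  moreover have "2 ^ (t + 1 - k) \<le> rank S i" using right left_edges_of_nat[of k t] k by simp
  moreover have "(2::nat) ^ (t + 2 - k) = 2 * 2 ^ (t + 1 - k)"
    using k by (simp add: Suc_diff_le flip: power_Suc)
  moreover have "(2::nat) ^ (t + 2 - k) \<le> N" by (rule pow_le_N) simp
  moreover have "nat (v + 1) = k + 1" using k by simp
  ultimately show ?thesis using k by auto
qed

lemma far_sites_top_fire:
  assumes B: "far_sites_top c" and C: "origin_low c" and AR: "positive_sites_high (mirror N c)"
    and E: "side_counts c" and L: "legal_firing t N c v S"
  shows "far_sites_top (fire t v S c)"
  unfolding far_sites_top_def
proof (intro allI impI)
  fix i assume i: "i < N" "2 \<le> fire t v S c i"
  show "fire t v S c i \<le> int t + 2 \<and> N - 2 ^ (t + 2 - nat (fire t v S c i)) \<le> i"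
  proof (cases "i \<in> S")
    case False
    then show ?thesis using B i unfolding far_sites_top_def by (simp add: fire_eq_rank)
  next
    case iS: True
    have ci: "c i = v" using legal_firing_chip[OF L iS] by simp
    consider (left) "rank S i < left_edges t v" | (right) "\<not> rank S i < left_edges t v" by blast
    then show ?thesis
    proof cases
      case left
      then have f: "fire t v S c i = v - 1" using iS by (simp add: fire_eq_rank)
      then have v: "3 \<le> v" using i by simp
      then have "v \<le> int t + 2" "N - 2 ^ (t + 2 - nat v) \<le> i"
        using B i ci unfolding far_sites_top_def by auto
      moreover have "(2::nat) ^ (t + 2 - nat v) \<le> 2 ^ (t + 2 - nat (v - 1))"
        using v by (intro power_increasing) auto
      then have "N - 2 ^ (t + 2 - nat (v - 1)) \<le> N - 2 ^ (t + 2 - nat v)" by (rule diff_le_mono2)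
      ultimately show ?thesis using f by simp
    next
      case right
      then have f: "fire t v S c i = v + 1" using iS by (simp add: fire_eq_rank)
      show ?thesis
      proof (cases "v = 1")
        case True
        then have "3 * 2 ^ t \<le> i" using site_1_right_movers_top[OF C AR E] L iS right by simp
        then show ?thesis using f True N_eq by simp
      next
        case False
        then have "2 \<le> v" using i f by simp
        then show ?thesis using far_sites_top_fire_right[OF B L _ iS right] f by simp
      qed
    qed
  qed
qed

lemma origin_low_fire:
  assumes C: "origin_low c" and AR: "positive_sites_high (mirror N c)"
    and E: "side_counts c" and L: "legal_firing t N c v S"
  shows "origin_low (fire t v S c)"
  unfolding origin_low_def
proof (intro impI allI)
  fix i assume full: "chip_count N (fire t v S c) {x. 1 \<le> x} = 2 * 2 ^ t"
    and i: "i < N" "fire t v S c i = 0"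
  have change: "chip_count N (fire t v S c) {x. 1 \<le> x} + (if v = 1 then left_edges t v else 0)
      = chip_count N c {x. 1 \<le> x} + (if v = 0 then right_edges t v else 0)"
    using chip_count_ge_fire[OF L, of 1] by simp
  consider (origin) "v = 0" | (one) "v = 1" | (other) "v \<noteq> 0" "v \<noteq> 1" by blast
  then show "i < 3 * 2 ^ t"
  proof cases
    case origin
    then have "chip_count N c {x. 1 \<le> x} = 2 ^ t" using change full by simp
    then have "\<not> (\<forall>i<N. c i = 0)" using not_all_zero_if_chip_count[of "{x. 1 \<le> x}" N c] by simp
    then have "S = chips_at N c 0" using origin_firing_empties_origin(1)[OF E] L origin by blast
    then show ?thesis
      using i origin unfolding chips_at_def by (auto simp: fire_eq_rank split: if_splits)
  next
    case one
    then have "chip_count N c {x. 1 \<le> x} = 3 * 2 ^ t" using change full by simp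
    moreover have "\<not> (\<forall>i<N. c i = 0)" using legal_firing_at_0_if_all_zero[OF L] one by auto
    ultimately show ?thesis using side_counts_cases(1)[OF E] by auto
  next
    case other
    show ?thesis
    proof (cases "i \<in> S")
      case True
      then have "c i = -1"
        using i other legal_firing_chip[OF L] by (auto simp: fire_eq_rank split: if_splits)
      then show ?thesis using negative_site_label_less[OF AR i(1)] by simp
    next
      case False
      have "chip_count N c {x. 1 \<le> x} = 2 * 2 ^ t" using change full other by simp
      then show ?thesis using C i False unfolding origin_low_def by (simp add: fire_eq_rank)
    qed
  qed
qed

lemma tails_divisible_fire:
  assumes D: "tails_divisible c" and L: "legal_firing t N c v S"
  shows "tails_divisible (fire t v S c)"
  unfolding tails_divisible_def
proof
  fix k :: nat
  have "edges t (int k) dvd chip_count N c {x. int k + 1 \<le> x}"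
    using D unfolding tails_divisible_def by simp
  moreover have "edges t (int k) dvd (if v = int k + 1 then left_edges t v else 0)"
    "edges t (int k) dvd (if v + 1 = int k + 1 then right_edges t v else 0)"
    unfolding left_edges_def right_edges_def by auto
  ultimately show "edges t (int k) dvd chip_count N (fire t v S c) {x. int k + 1 \<le> x}"
    using chip_count_ge_fire[OF L, of "int k + 1"] by (metis dvd_add dvd_add_left_iff)
qed

lemma right_invariant_fire:
  assumes "right_invariant c" "positive_sites_high (mirror N c)" "side_counts c"
    and "legal_firing t N c v S"
  shows "right_invariant (fire t v S c)"
  using assms positive_sites_high_fire far_sites_top_fire origin_low_fire tails_divisible_fire
  unfolding right_invariant_def by blast

lemma side_counts_mirror: "side_counts (mirror N c) \<longleftrightarrow> side_counts c"
  unfolding side_counts_def mirror_all_zero_iff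
  using chip_count_mirror_ge[of N c 1] chip_count_mirror_le[of N c 1] by auto

lemma side_counts_fire:
  assumes E: "side_counts c" and L: "legal_firing t N c v S" and v: "0 \<le> v"
  shows "side_counts (fire t v S c)"
proof -
  have right: "chip_count N (fire t v S c) {x. 1 \<le> x} + (if v = 1 then 2 ^ t else 0)
      = chip_count N c {x. 1 \<le> x} + (if v = 0 then 2 ^ t else 0)"
    using chip_count_ge_fire[OF L, of 1] by auto
  have left: "chip_count N (fire t v S c) {x. x \<le> -1}
      = chip_count N c {x. x \<le> -1} + (if v = 0 then 2 ^ t else 0)"
    using chip_count_le_fire[OF L, of "-1"] v by auto
  show ?thesis
  proof (cases "\<forall>i<N. c i = 0")
    case True
    then have "v = 0" using legal_firing_at_0_if_all_zero[OF L] by simp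
    then show ?thesis
      using right left chip_count_if_all_zero[OF True] unfolding side_counts_def by simp
  next
    case False
    note sides = side_counts_cases[OF E False]
    consider "v = 0" | "v = 1" | "2 \<le> v" using v by linarith
    then show ?thesis
    proof cases
      case 1
      then have "chip_count N c {x. 1 \<le> x} = 2 ^ t" "chip_count N c {x. x \<le> -1} = 2 ^ t"
        using origin_firing_empties_origin(2,3)[OF E] L False by auto
      then show ?thesis using right left \<open>v = 0\<close> unfolding side_counts_def by simp
    next
      case 2
      have "2 ^ t + 1 \<le> chip_count N c {1}"
        using legal_firing_chip_count[OF L] edges_ge_1[of t 1] \<open>v = 1\<close>
        unfolding right_edges_def by simp
      also have "\<dots> \<le> chip_count N c {x. 1 \<le> x}" by (rule chip_count_mono) auto
      finally have "chip_count N c {x. 1 \<le> x} = 2 * 2 ^ t" using sides(1) by auto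
      then show ?thesis using right left sides(2) \<open>v = 1\<close> unfolding side_counts_def by simp
    next
      case 3
      then show ?thesis using right left sides unfolding side_counts_def by simp
    qed
  qed
qed

definition moment :: "(nat \<Rightarrow> int) \<Rightarrow> nat" where
  "moment c = (\<Sum>k<t + 2. 2 ^ min k t * chip_count N c {x. int k + 1 \<le> x})"

text \<open>Firing at a site \<open>1 \<le> v \<le> t + 1\<close> takes \<open>2 ^ (t + 1 - v)\<close> chips out of the tail \<open>x \<ge> v\<close>
  (weight \<open>2 ^ (v - 1)\<close>) and puts \<open>right_edges t v\<close> chips into the tail \<open>x \<ge> v + 1\<close>
  (weight \<open>2 ^ min v t\<close>), both worth \<open>2 ^ t\<close>: only firing at the origin changes the moment,
  and it raises the moments of both sides by \<open>2 ^ t\<close>.\<close>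
definition balanced :: "(nat \<Rightarrow> int) \<Rightarrow> bool" where
  "balanced c \<longleftrightarrow> moment c = moment (mirror N c)"

lemma moment_fire:
  assumes L: "legal_firing t N c v S"
  shows "moment (fire t v S c)
      + (\<Sum>k<t + 2. 2 ^ min k t * (if v = int k + 1 then left_edges t v else 0))
    = moment c + (\<Sum>k<t + 2. 2 ^ min k t * (if v + 1 = int k + 1 then right_edges t v else 0))"
proof -
  have "2 ^ min k t * chip_count N (fire t v S c) {x. int k + 1 \<le> x}
      + 2 ^ min k t * (if v = int k + 1 then left_edges t v else 0)
    = 2 ^ min k t * chip_count N c {x. int k + 1 \<le> x}
      + 2 ^ min k t * (if v + 1 = int k + 1 then right_edges t v else 0)" for k
    unfolding distrib_left[symmetric] chip_count_ge_fire[OF L] ..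
  then show ?thesis unfolding moment_def sum.distrib[symmetric] by (rule sum.cong[OF refl])
qed

lemma moment_fire_origin:
  assumes "legal_firing t N c 0 S"
  shows "moment (fire t 0 S c) = moment c + 2 ^ t"
proof -
  have "(\<Sum>k<t + 2. 2 ^ min k t * (if (0::int) + 1 = int k + 1 then right_edges t 0 else 0)) = 2 ^ t"
    by (subst sum_mult_if_unique[where a = 0]) auto
  then show ?thesis using moment_fire[OF assms] by simp
qed

lemma moment_fire_positive:
  assumes L: "legal_firing t N c v S" and v: "1 \<le> v" "v \<le> int t + 1"
  shows "moment (fire t v S c) = moment c"
proof -
  define j where "j = nat v"
  have j: "v = int j" "1 \<le> j" "j \<le> t + 1" using v unfolding j_def by auto
  have "(\<Sum>k<t + 2. 2 ^ min k t * (if v = int k + 1 then left_edges t v else 0))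
      = 2 ^ (j - 1) * 2 ^ (t + 1 - j)"
    using j by (subst sum_mult_if_unique[where a = "j - 1"]) (auto simp: left_edges_of_nat)
  also have "\<dots> = 2 ^ t" using j by (simp flip: power_add)
  also have "\<dots> = (\<Sum>k<t + 2. 2 ^ min k t * (if v + 1 = int k + 1 then right_edges t v else 0))"
  proof (subst sum_mult_if_unique[where a = j])
    show "(2::nat) ^ t = (if j < t + 2 then 2 ^ min j t * right_edges t v else 0)"
    proof (cases "j \<le> t")
      case True
      then show ?thesis using j by (simp add: right_edges_of_nat flip: power_add)
    next
      case False
      then show ?thesis using j by (simp add: right_edges_def edges_beyond)
    qed
  qed (use j in auto)
  finally show ?thesis using moment_fire[OF L] by simp
qed

lemma moment_mirror:
  "moment (mirror N c) = (\<Sum>k<t + 2. 2 ^ min k t * chip_count N c {x. x \<le> - (int k + 1)})"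
  unfolding moment_def by (simp add: chip_count_mirror_ge)

lemma moment_mirror_fire:
  assumes L: "legal_firing t N c v S" and v: "0 \<le> v"
  shows "moment (mirror N (fire t v S c)) = moment (mirror N c) + (if v = 0 then 2 ^ t else 0)"
proof -
  have "chip_count N (fire t v S c) {x. x \<le> - (int k + 1)}
      = chip_count N c {x. x \<le> - (int k + 1)} + (if v = 0 \<and> k = 0 then 2 ^ t else 0)" for k
    using chip_count_le_fire[OF L, of "- (int k + 1)"] v by auto
  then have "moment (mirror N (fire t v S c))
      = (\<Sum>k<t + 2. 2 ^ min k t * chip_count N c {x. x \<le> - (int k + 1)}
          + (if v = 0 \<and> k = 0 then 2 ^ t else 0))"
    unfolding moment_mirror by (intro sum.cong) (auto simp: distrib_left)
  also have "\<dots> = moment (mirror N c) + (if v = 0 then 2 ^ t else 0)"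
    unfolding moment_mirror sum.distrib by (cases "v = 0") simp_all
  finally show ?thesis .
qed

lemma balanced_mirror: "balanced (mirror N c) \<longleftrightarrow> balanced c"
  unfolding balanced_def by auto

lemma balanced_fire:
  assumes F: "balanced c" and B: "far_sites_top c" and L: "legal_firing t N c v S" and v: "0 \<le> v"
  shows "balanced (fire t v S c)"
proof (cases "v = 0")
  case True
  then show ?thesis
    using F moment_fire_origin L moment_mirror_fire[OF L v] unfolding balanced_def by simp
next
  case False
  then have "v \<le> int t + 1" using far_sites_top_firing_site[OF B L] by force
  then show ?thesis
    using F False v moment_fire_positive[OF L] moment_mirror_fire[OF L v] unfolding balanced_def
    by simp
qed

definition inner_sites_sorted :: "(nat \<Rightarrow> int) \<Rightarrow> bool" where
  "inner_sites_sorted c \<longleftrightarrow>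
     (chip_count N c {x. 1 \<le> x} = 2 * 2 ^ t \<and> chip_count N c {x. x \<le> -1} = 2 * 2 ^ t \<and>
      chip_count N c {x. 2 \<le> x} = 2 ^ t \<and> chip_count N c {x. x \<le> -2} = 2 ^ t
      \<longrightarrow> (\<forall>i<N. \<forall>j<N. c i = -1 \<longrightarrow> c j = 1 \<longrightarrow> i < j))"

lemma inner_sites_sorted_mirror_imp:
  assumes G: "inner_sites_sorted c"
  shows "inner_sites_sorted (mirror N c)"
  unfolding inner_sites_sorted_def
    chip_count_mirror_ge[of N c 1] chip_count_mirror_le[of N c 1]
    chip_count_mirror_ge[of N c 2] chip_count_mirror_le[of N c 2]
proof (intro impI allI)
  fix i j
  assume counts: "chip_count N c {x. x \<le> - 1} = 2 * 2 ^ t \<and> chip_count N c {x. 1 \<le> x} = 2 * 2 ^ t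
      \<and> chip_count N c {x. x \<le> - 2} = 2 ^ t \<and> chip_count N c {x. 2 \<le> x} = 2 ^ t"
    and ij: "i < N" "j < N" "mirror N c i = -1" "mirror N c j = 1"
  then have "c (N - 1 - i) = 1" "c (N - 1 - j) = -1" by (simp_all add: mirror_def)
  moreover have "\<forall>i<N. \<forall>j<N. c i = -1 \<longrightarrow> c j = 1 \<longrightarrow> i < j"
    using G counts unfolding inner_sites_sorted_def by blast
  ultimately have "N - 1 - j < N - 1 - i" using ij by simp
  then show "i < j" using ij by simp
qed

lemma inner_sites_sorted_mirror: "inner_sites_sorted (mirror N c) \<longleftrightarrow> inner_sites_sorted c"
  using inner_sites_sorted_mirror_imp[of c] inner_sites_sorted_mirror_imp[of "mirror N c"] by auto

lemma origin_firing_sites_1_empty: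
  assumes E: "side_counts c" and L: "legal_firing t N c 0 S"
    and P1: "chip_count N (fire t 0 S c) {x. 1 \<le> x} = 2 * 2 ^ t"
    and P2: "chip_count N (fire t 0 S c) {x. 2 \<le> x} = 2 ^ t"
    and Q2: "chip_count N (fire t 0 S c) {x. x \<le> -2} = 2 ^ t"
  shows "chip_count N c {1} = 0" "chip_count N c {-1} = 0"
proof -
  have "chip_count N c {x. 1 \<le> x} = 2 ^ t"
    using P1 chip_count_ge_fire[OF L, of 1] by simp
  moreover have "chip_count N c {x. 2 \<le> x} = 2 ^ t"
    using P2 chip_count_ge_fire[OF L, of 2] by simp
  ultimately show "chip_count N c {1} = 0" using chip_count_ge_split[of N c 1] by simp
  have "\<not> (\<forall>i<N. c i = 0)"
    using not_all_zero_if_chip_count[of "{x. 1 \<le> x}" N c] \<open>chip_count N c {x. 1 \<le> x} = 2 ^ t\<close>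
    by simp
  then have "chip_count N c {x. x \<le> -1} = 2 ^ t"
    using origin_firing_empties_origin(3)[OF E L] by blast
  moreover have "chip_count N c {x. x \<le> -2} = 2 ^ t"
    using Q2 chip_count_le_fire[OF L, of "-2"] by simp
  ultimately show "chip_count N c {-1} = 0" using chip_count_le_split[of N c "-1"] by simp
qed

text \<open>The count hypotheses can only become true by firing at the origin while sites \<open>-1\<close> and
  \<open>1\<close> are empty; then the chips arriving there are the lower and upper halves of \<open>S\<close>.\<close>
lemma inner_sites_sorted_fire:
  assumes G: "inner_sites_sorted c" and E: "side_counts c" and B: "far_sites_top c"
    and L: "legal_firing t N c v S" and v: "0 \<le> v"
  shows "inner_sites_sorted (fire t v S c)"
  unfolding inner_sites_sorted_def
proof (intro impI allI)
  let ?c' = "fire t v S c"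
  fix i j
  assume counts: "chip_count N ?c' {x. 1 \<le> x} = 2 * 2 ^ t \<and> chip_count N ?c' {x. x \<le> -1} = 2 * 2 ^ t
     \<and> chip_count N ?c' {x. 2 \<le> x} = 2 ^ t \<and> chip_count N ?c' {x. x \<le> -2} = 2 ^ t"
    and ij: "i < N" "j < N" "?c' i = -1" "?c' j = 1"
  consider "v = 0" | "v = 1" | "v = 2" | "3 \<le> v" using v by linarith
  then show "i < j"
  proof cases
    case 1
    then have "chip_count N c {1} = 0" "chip_count N c {-1} = 0"
      using origin_firing_sites_1_empty[OF E] L counts by auto
    then have "i \<in> S" "j \<in> S"
      using ij by (auto simp: chip_count_eq_0_iff fire_eq_rank split: if_splits)
    then have "rank S i < rank S j" using ij \<open>v = 0\<close> by (auto simp: fire_eq_rank split: if_splits)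
    then show ?thesis by (rule less_if_rank_less)
  next
    case 2
    then have "chip_count N c {x. 1 \<le> x} = 3 * 2 ^ t"
      using counts chip_count_ge_fire[OF L, of 1] by simp
    moreover have "\<not> (\<forall>i<N. c i = 0)" using legal_firing_at_0_if_all_zero[OF L] \<open>v = 1\<close> by auto
    ultimately show ?thesis using side_counts_cases(1)[OF E] by auto
  next
    case 3
    then have "chip_count N c {x. 2 \<le> x} = 2 ^ t + left_edges t 2"
      using counts chip_count_ge_fire[OF L, of 2] by simp
    then show ?thesis using far_sites_top_chip_count[OF B, of 2] edges_ge_1[of t 1]
      unfolding left_edges_def by simp
  next
    case 4
    then have "chip_count N c {x. 1 \<le> x} = 2 * 2 ^ t" "chip_count N c {x. x \<le> -1} = 2 * 2 ^ t"
      "chip_count N c {x. 2 \<le> x} = 2 ^ t" "chip_count N c {x. x \<le> -2} = 2 ^ t"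
      using counts chip_count_ge_fire[OF L, of 1] chip_count_ge_fire[OF L, of 2]
        chip_count_le_fire[OF L, of "-1"] chip_count_le_fire[OF L, of "-2"] by auto
    moreover have "c i = -1" "c j = 1"
      using ij \<open>3 \<le> v\<close> by (auto simp: fire_eq_rank split: if_splits)
    ultimately show ?thesis using G ij unfolding inner_sites_sorted_def by blast
  qed
qed

definition invariant :: "(nat \<Rightarrow> int) \<Rightarrow> bool" where
  "invariant c \<longleftrightarrow> right_invariant c \<and> right_invariant (mirror N c) \<and>
     side_counts c \<and> balanced c \<and> inner_sites_sorted c"

lemma invariant_mirror: "invariant c \<Longrightarrow> invariant (mirror N c)"
  unfolding invariant_def using side_counts_mirror balanced_mirror inner_sites_sorted_mirror by auto

lemma invariant_fire_nonneg:
  assumes I: "invariant c" and L: "legal_firing t N c v S" and v: "0 \<le> v"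
  shows "invariant (fire t v S c)"
proof -
  have R: "right_invariant c" "right_invariant (mirror N c)" and E: "side_counts c"
    and F: "balanced c" and G: "inner_sites_sorted c"
    using I unfolding invariant_def by auto
  have A: "positive_sites_high c" "positive_sites_high (mirror N c)" and B: "far_sites_top c"
    using R unfolding right_invariant_def by auto
  have "right_invariant (fire t v S c)" using right_invariant_fire[OF R(1) A(2) E L] .
  moreover have "right_invariant (mirror N (fire t v S c))"
    unfolding mirror_fire[OF L]
    by (rule right_invariant_fire[OF R(2) _ _ legal_firing_mirror[OF L]])
      (use A(1) E side_counts_mirror in simp_all)
  ultimately show ?thesis
    unfolding invariant_def using side_counts_fire[OF E L v] balanced_fire[OF F B L v]
      inner_sites_sorted_fire[OF G E B L v] by simp
qed

lemma invariant_step: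
  assumes I: "invariant c" and S: "step t N c c'"
  shows "invariant c'"
proof -
  obtain v S where L: "legal_firing t N c v S" and c': "c' = fire t v S c"
    using S unfolding step_iff_legal_firing by blast
  show ?thesis
  proof (cases "0 \<le> v")
    case True
    then show ?thesis using invariant_fire_nonneg[OF I L] c' by simp
  next
    case False
    have "invariant (mirror N c')"
      using invariant_fire_nonneg[OF invariant_mirror[OF I] legal_firing_mirror[OF L]] False
      by (simp add: c' mirror_fire[OF L])
    then show ?thesis using invariant_mirror[of "mirror N c'"] by simp
  qed
qed

lemma invariant_reachable:
  assumes "(step t N)\<^sup>*\<^sup>* (\<lambda>_. 0) c"
  shows "invariant c"
  using assms
proof (induction rule: rtranclp_induct)
  case base
  have "mirror N (\<lambda>_. 0) = (\<lambda>_. 0)" unfolding mirror_def by auto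
  then show ?case
    unfolding invariant_def right_invariant_def positive_sites_high_def far_sites_top_def
      origin_low_def tails_divisible_def side_counts_def balanced_def inner_sites_sorted_def
    using chip_count_if_all_zero[of N "\<lambda>_. 0"] by simp
next
  case (step c c')
  then show ?case using invariant_step by blast
qed

section \<open>Stable configurations\<close>

lemma edges_succ_dvd: "k \<le> t \<Longrightarrow> edges t (int k + 1) dvd 2 ^ (t - k)"
proof (cases "k = t")
  case False
  moreover assume "k \<le> t"
  ultimately have "edges t (int k + 1) = 2 ^ (t - Suc k)"
    using edges_of_nat[of "Suc k" t] by (simp add: add.commute)
  then show ?thesis by (simp add: le_imp_power_dvd)
qed (simp add: edges_beyond)

text \<open>Stability at site \<open>k + 1\<close> leaves fewer than \<open>2 ^ (t - k) + edges t (k + 1)\<close> chips there,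
  so the next tail is a multiple of \<open>edges t (k + 1)\<close> in the window left by \<open>far_sites_top\<close>.\<close>
lemma tail_counts_if_stable:
  assumes R: "right_invariant c" and S: "stable t N c"
    and full: "chip_count N c {x. 1 \<le> x} = 2 * 2 ^ t"
  shows "k \<le> t + 1 \<Longrightarrow> chip_count N c {x. int k + 1 \<le> x} = 2 ^ (t + 1 - k)"
proof (induction k)
  case 0
  then show ?case using full by simp
next
  case (Suc k)
  then have IH: "chip_count N c {x. int k + 1 \<le> x} = 2 * 2 ^ (t - k)" and k: "k \<le> t"
    by (auto simp: Suc_diff_le)
  let ?e = "edges t (int k + 1)" and ?T = "chip_count N c {x. int k + 1 + 1 \<le> x}"
  have "chip_count N c {int k + 1} < 2 ^ (t - k) + ?e"
    using stable_chip_count[OF S, of "int k + 1"] left_edges_of_nat[of "Suc k" t] k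
    by (simp add: right_edges_def add.commute)
  then have lower: "2 ^ (t - k) < ?T + ?e" using IH chip_count_ge_split[of N c "int k + 1"] by simp
  have "?T \<le> 2 ^ (t - k)"
    using far_sites_top_chip_count[of c "k + 2"] R unfolding right_invariant_def
    by (simp add: add.commute)
  moreover have "tails_divisible c" using R unfolding right_invariant_def by simp
  then have "?e dvd ?T" unfolding tails_divisible_def by (metis of_nat_Suc add.commute)
  ultimately have "?T = 2 ^ (t - k)"
    using lower edges_succ_dvd[OF k] by (intro dvd_eq_if_le_less_add)
  then show ?case by (simp add: add.commute)
qed

lemma tail_eq_top_labels:
  assumes B: "far_sites_top c" and j: "2 \<le> j" "j \<le> t + 2"
    and count: "chip_count N c {x. int j \<le> x} = 2 ^ (t + 2 - j)"
  shows "{i. i < N \<and> c i \<in> {x. int j \<le> x}} = {N - 2 ^ (t + 2 - j)..<N}"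
proof (rule card_subset_eq)
  show "card {i. i < N \<and> c i \<in> {x. int j \<le> x}} = card {N - 2 ^ (t + 2 - j)..<N}"
    using count pow_le_N[of "t + 2 - j"] unfolding chip_count_def by simp
qed (use far_sites_top_subset[OF B j(1)] in auto)

lemma far_sites_sorted:
  assumes B: "far_sites_top c"
    and tails: "\<And>k. k \<le> t + 1 \<Longrightarrow> chip_count N c {x. int k + 1 \<le> x} = 2 ^ (t + 1 - k)"
    and ab: "a < b" "b < N" and ca: "2 \<le> c a"
  shows "c a \<le> c b"
proof -
  define j where "j = nat (c a)"
  have "c a \<le> int t + 2" using ca ab B unfolding far_sites_top_def by simp
  then have j: "2 \<le> j" "j \<le> t + 2" "c a = int j" using ca unfolding j_def by auto
  have "chip_count N c {x. int j \<le> x} = 2 ^ (t + 2 - j)"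
    using tails[of "j - 1"] j by (simp add: of_nat_diff Suc_diff_le)
  note top = tail_eq_top_labels[OF B j(1,2) this]
  have "a \<in> {i. i < N \<and> c i \<in> {x. int j \<le> x}}" using ab j by simp
  then have "b \<in> {i. i < N \<and> c i \<in> {x. int j \<le> x}}" unfolding top using ab by simp
  then show ?thesis using j by simp
qed

text \<open>Otherwise only \<open>2 ^ t\<close> chips sit at negative sites, and every tail count of the mirror is
  bounded by \<open>far_sites_top\<close>, so the moment of the mirror would fall short of the moment.\<close>
lemma stable_negative_side_full:
  assumes I: "invariant c" and S: "stable t N c"
    and full: "chip_count N c {x. 1 \<le> x} = 2 * 2 ^ t"
  shows "chip_count N c {x. x \<le> -1} = 2 * 2 ^ t"
proof (rule ccontr)
  assume "chip_count N c {x. x \<le> -1} \<noteq> 2 * 2 ^ t"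
  moreover have "\<not> (\<forall>i<N. c i = 0)"
    using not_all_zero_if_chip_count[of "{x. 1 \<le> x}" N c] full by simp
  ultimately have neg: "chip_count N (mirror N c) {x. 1 \<le> x} = 2 ^ t"
    using side_counts_cases(2)[of c] I chip_count_mirror_ge[of N c 1]
    unfolding invariant_def by auto
  have R: "right_invariant c" and BR: "far_sites_top (mirror N c)"
    using I unfolding invariant_def right_invariant_def by auto
  have "moment (mirror N c) < moment c"
    unfolding moment_def
  proof (rule sum_strict_mono_ex1)
    have "chip_count N (mirror N c) {x. int k + 1 \<le> x} \<le> chip_count N c {x. int k + 1 \<le> x}"
      if "k < t + 2" for k
    proof (cases "k = 0")
      case False
      then have "chip_count N (mirror N c) {x. int (k + 1) \<le> x} \<le> 2 ^ (t + 2 - (k + 1))"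
        by (intro far_sites_top_chip_count[OF BR]) simp
      then show ?thesis
        using tail_counts_if_stable[OF R S full, of k] that by (simp add: add.commute)
    qed (use neg full in simp)
    then show "\<forall>k\<in>{..<t + 2}. 2 ^ min k t * chip_count N (mirror N c) {x. int k + 1 \<le> x}
        \<le> 2 ^ min k t * chip_count N c {x. int k + 1 \<le> x}"
      by simp
    show "\<exists>k\<in>{..<t + 2}. 2 ^ min k t * chip_count N (mirror N c) {x. int k + 1 \<le> x}
        < 2 ^ min k t * chip_count N c {x. int k + 1 \<le> x}"
      using neg full by (intro bexI[of _ 0]) auto
  qed simp
  then show False using I unfolding invariant_def balanced_def by simp
qed

lemma stable_sides_full:
  assumes I: "invariant c" and S: "stable t N c"
  shows "chip_count N c {x. 1 \<le> x} = 2 * 2 ^ t" "chip_count N c {x. x \<le> -1} = 2 * 2 ^ t"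
proof -
  have origin: "chip_count N c {0} < 2 * 2 ^ t" using stable_chip_count[OF S, of 0] by simp
  then have "\<not> (\<forall>i<N. c i = 0)" using chip_count_if_all_zero[of N c "{0}"] N_eq by auto
  then have "chip_count N c {x. 1 \<le> x} \<in> {2 ^ t, 2 * 2 ^ t}"
    "chip_count N c {x. x \<le> -1} \<in> {2 ^ t, 2 * 2 ^ t}"
    using I side_counts_cases unfolding invariant_def by auto
  then have "chip_count N c {x. 1 \<le> x} = 2 * 2 ^ t \<or> chip_count N c {x. x \<le> -1} = 2 * 2 ^ t"
    using origin chip_count_sign_split[of N c] N_eq by auto
  moreover note stable_negative_side_full[OF I S]
    stable_negative_side_full[OF invariant_mirror[OF I] stable_mirror[OF S]]
  ultimately show "chip_count N c {x. 1 \<le> x} = 2 * 2 ^ t"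
    and "chip_count N c {x. x \<le> -1} = 2 * 2 ^ t"
    using chip_count_mirror_ge[of N c 1] chip_count_mirror_le[of N c 1] by auto
qed

lemma stable_tail_counts:
  assumes I: "invariant c" and S: "stable t N c" and k: "k \<le> t + 1"
  shows "chip_count N c {x. int k + 1 \<le> x} = 2 ^ (t + 1 - k)"
    and "chip_count N (mirror N c) {x. int k + 1 \<le> x} = 2 ^ (t + 1 - k)"
proof -
  have R: "right_invariant c" "right_invariant (mirror N c)" using I unfolding invariant_def by auto
  note full = stable_sides_full[OF I S]
  show "chip_count N c {x. int k + 1 \<le> x} = 2 ^ (t + 1 - k)"
    using tail_counts_if_stable[OF R(1) S full(1) k] .
  show "chip_count N (mirror N c) {x. int k + 1 \<le> x} = 2 ^ (t + 1 - k)"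
    using tail_counts_if_stable[OF R(2) stable_mirror[OF S] _ k] full(2)
      chip_count_mirror_ge[of N c 1] by simp
qed

lemma sorted_if_stable:
  assumes I: "invariant c" and S: "stable t N c" and ab: "a < b" "b < N"
  shows "c a \<le> c b"
proof -
  have R: "right_invariant c" "right_invariant (mirror N c)" using I unfolding invariant_def by auto
  note full = stable_sides_full[OF I S]
  note tails = stable_tail_counts(1)[OF I S] and mirror_tails = stable_tail_counts(2)[OF I S]
  consider "2 \<le> c a" | "c b \<le> -2" | "c a \<le> 1" "-1 \<le> c b" by linarith
  then show ?thesis
  proof cases
    case 1
    then show ?thesis
      using far_sites_sorted[OF _ tails ab] R(1) unfolding right_invariant_def by blast
  next
    case 2
    then have "- c b \<le> - c a"
      using far_sites_sorted[OF _ mirror_tails, of "N - 1 - b" "N - 1 - a"] R(2) ab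
      unfolding right_invariant_def by (simp add: mirror_def)
    then show ?thesis by simp
  next
    case 3
    have "chip_count N c {0} = 0" using chip_count_sign_split[of N c] full N_eq by simp
    then have "c a \<noteq> 0" "c b \<noteq> 0" using ab by (auto simp: chip_count_eq_0_iff)
    show ?thesis
    proof (rule ccontr)
      assume "\<not> c a \<le> c b"
      then have "c a = 1" "c b = -1" using 3 \<open>c a \<noteq> 0\<close> \<open>c b \<noteq> 0\<close> by linarith+
      moreover have "\<forall>i<N. \<forall>j<N. c i = -1 \<longrightarrow> c j = 1 \<longrightarrow> i < j"
        using I full tails[of 1] mirror_tails[of 1] chip_count_mirror_ge[of N c 2]
        unfolding invariant_def inner_sites_sorted_def by simp
      moreover have "a < N" using ab by simp
      ultimately have "b < a" using ab(2) by simp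
      then show False using ab(1) by simp
    qed
  qed
qed

end

theorem theorem3p7:
  fixes t :: nat and c :: "nat \<Rightarrow> int"
  assumes "(step t (2 ^ (t + 2)))\<^sup>*\<^sup>* (\<lambda>_. 0) c"
    and "stable t (2 ^ (t + 2)) c"
  shows "\<forall>a b. a < b \<and> b < 2 ^ (t + 2) \<longrightarrow> c a \<le> c b"
proof -
  interpret exp_chip_sorting t "2 ^ (t + 2)"
    by unfold_locales (simp add: power_add)
  show ?thesis using sorted_if_stable[OF invariant_reachable[OF assms(1)] assms(2)] by blast
qed

end
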